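(* There exist two players with the same (general, non-additive) valuation $v$ over a finite set of goods such that no allocation is both EFX and Pareto optimal. Here $v$ is allowed to have zero marginal utility, i.e. $v(S\cup\{g\})=v(S)$ for some $S$ and $g\notin S$.
   Context: A valuation is a function $v:2^M\to\mathbb{R}_{\ge0}$ with $v(\emptyset)=0$ that is monotone: $v(S)\le v(T)$ whenever $S\subseteq T$. An allocation is an ordered partition $(A_1,\dots,A_n)$ of $M$; parts may be empty. It is EFX if for all players $i,j$ and every $g\in A_j$ we have $v_i(A_i)\ge v_i(A_j\setminus\{g\})$. It is Pareto optimal (PO) if there is no allocation $B$ with $v_i(B_i)\ge v_i(A_i)$ for all $i$ and $v_j(B_j)>v_j(A_j)$ for some $j$. *)

theory Defs
  imports Complex_Main
begin

definition valuation :: "'g set \<Rightarrow> ('g set \<Rightarrow> real) \<Rightarrow> bool" where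
  "valuation M v \<longleftrightarrow> v {} = 0 \<and> (\<forall>S. S \<subseteq> M \<longrightarrow> 0 \<le> v S) \<and>
     (\<forall>S T. S \<subseteq> T \<and> T \<subseteq> M \<longrightarrow> v S \<le> v T)"

definition allocation :: "'p set \<Rightarrow> 'g set \<Rightarrow> ('p \<Rightarrow> 'g set) \<Rightarrow> bool" where
  "allocation N M A \<longleftrightarrow> (\<forall>i\<in>N. A i \<subseteq> M) \<and> (\<Union>i\<in>N. A i) = M \<and>
     (\<forall>i\<in>N. \<forall>j\<in>N. i \<noteq> j \<longrightarrow> A i \<inter> A j = {})"

definition EFX :: "'p set \<Rightarrow> ('p \<Rightarrow> 'g set \<Rightarrow> real) \<Rightarrow> ('p \<Rightarrow> 'g set) \<Rightarrow> bool" where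
  "EFX N vs A \<longleftrightarrow> (\<forall>i\<in>N. \<forall>j\<in>N. \<forall>g\<in>A j. vs i (A j - {g}) \<le> vs i (A i))"

definition pareto_optimal ::
  "'p set \<Rightarrow> 'g set \<Rightarrow> ('p \<Rightarrow> 'g set \<Rightarrow> real) \<Rightarrow> ('p \<Rightarrow> 'g set) \<Rightarrow> bool" where
  "pareto_optimal N M vs A \<longleftrightarrow> \<not> (\<exists>B. allocation N M B \<and>
     (\<forall>i\<in>N. vs i (A i) \<le> vs i (B i)) \<and> (\<exists>j\<in>N. vs j (A j) < vs j (B j)))"

end

(* Goods 0, 1, 2: the goods 1 and 2 are complements worth 1 together, and good 0 doubles their
   value but is worthless on its own.  Two disjoint bundles cannot both contain 1 and 2, so unless
   one player receives everything, the allocation is Pareto dominated by the grand bundle.  But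
   when one player receives everything, the other envies the bundle {1, 2} left after removing
   good 0. *)
theory Submission
  imports Defs
begin

definition complement_valuation :: "nat set \<Rightarrow> real" where
  "complement_valuation S = (if 1 \<in> S \<and> 2 \<in> S then (if 0 \<in> S then 2 else 1) else 0)"

lemma valuation_complement_valuation: "valuation {0,1,2} complement_valuation"
  unfolding valuation_def complement_valuation_def by auto

lemma complement_valuation_le_2: "complement_valuation S \<le> 2"
  by (simp add: complement_valuation_def)

lemma complement_valuation_eq_2_iff: "complement_valuation S = 2 \<longleftrightarrow> {0,1,2} \<subseteq> S"
  by (auto simp: complement_valuation_def)

lemma complement_valuation_disjoint:
  "S \<inter> T = {} \<Longrightarrow> complement_valuation S = 0 \<or> complement_valuation T = 0"
  by (auto simp: complement_valuation_def)

lemma allocation_grand_bundle: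
  "k \<in> N \<Longrightarrow> allocation N M (\<lambda>i. if i = k then M else {})"
  by (auto simp: allocation_def)

lemma not_pareto_optimal_if_dominated:
  assumes "allocation N M B" "\<forall>i\<in>N. vs i (A i) \<le> vs i (B i)" "j \<in> N" "vs j (A j) < vs j (B j)"
  shows "\<not> pareto_optimal N M vs A"
  using assms unfolding pareto_optimal_def by blast

lemma pareto_optimal_complement_valuation_eq_2:
  assumes po: "pareto_optimal N {0,1,2} (\<lambda>_. complement_valuation) A"
    and k: "k \<in> N" and others: "\<forall>i\<in>N - {k}. complement_valuation (A i) = 0"
  shows "complement_valuation (A k) = 2"
proof (rule ccontr)
  assume "complement_valuation (A k) \<noteq> 2"
  then have less: "complement_valuation (A k) < 2"
    using complement_valuation_le_2 order_less_le by blast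
  define B :: "'a \<Rightarrow> nat set" where "B i = (if i = k then {0,1,2} else {})" for i
  have dominated: "complement_valuation (A i) \<le> complement_valuation (B i)" if "i \<in> N" for i
  proof (cases "i = k")
    case True
    then show ?thesis
      using complement_valuation_le_2 by (simp add: B_def complement_valuation_def)
  next
    case False
    then show ?thesis
      using others that by (simp add: B_def complement_valuation_def)
  qed
  moreover have "complement_valuation (A k) < complement_valuation (B k)"
    using less by (simp add: B_def complement_valuation_def)
  moreover have "allocation N {0,1,2} B"
    unfolding B_def using allocation_grand_bundle[OF k] .
  ultimately have "\<not> pareto_optimal N {0,1,2} (\<lambda>_. complement_valuation) A"
    using k by (intro not_pareto_optimal_if_dominated[where B = B and j = k]) auto
  with po show False by contradiction
qed

lemma pareto_optimal_complement_valuation_grand_bundle: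
  assumes alloc: "allocation {0,1::nat} {0,1,2} A"
    and po: "pareto_optimal {0,1} {0,1,2} (\<lambda>_. complement_valuation) A"
  obtains k where "k \<in> {0,1}" "A k = {0,1,2}" "A (1 - k) = {}"
proof -
  have sub: "A 0 \<subseteq> {0,1,2}" "A 1 \<subseteq> {0,1,2}" and disj: "A 0 \<inter> A 1 = {}"
    using alloc unfolding allocation_def by auto
  have grand_bundle: "A k = {0,1,2}" if "k \<in> {0,1}" "complement_valuation (A (1 - k)) = 0" for k
  proof -
    have "{0,1::nat} - {k} = {1 - k}"
      using that(1) by auto
    then have "complement_valuation (A k) = 2"
      using pareto_optimal_complement_valuation_eq_2[OF po that(1)] that(2) by simp
    then show ?thesis
      using sub that(1) complement_valuation_eq_2_iff by blast
  qed
  consider "complement_valuation (A 1) = 0" | "complement_valuation (A 0) = 0"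
    using complement_valuation_disjoint[OF disj] by blast
  then show thesis
  proof cases
    case 1
    then have "A 0 = {0,1,2}"
      using grand_bundle[of 0] by simp
    with disj sub(2) have "A 1 = {}"
      by blast
    with \<open>A 0 = {0,1,2}\<close> show thesis
      using that[of 0] by simp
  next
    case 2
    then have "A 1 = {0,1,2}"
      using grand_bundle[of 1] by simp
    with disj sub(1) have "A 0 = {}"
      by blast
    with \<open>A 1 = {0,1,2}\<close> show thesis
      using that[of 1] by simp
  qed
qed

lemma grand_bundle_not_EFX:
  assumes k: "k \<in> {0,1}" "A k = {0,1,2}" "A (1 - k) = {}"
  shows "\<not> EFX {0,1::nat} (\<lambda>_. complement_valuation) A"
proof
  assume efx: "EFX {0,1} (\<lambda>_. complement_valuation) A"
  have "1 - k \<in> {0,1}" "0 \<in> A k"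
    using k by auto
  then have "complement_valuation (A k - {0}) \<le> complement_valuation (A (1 - k))"
    using efx k(1) unfolding EFX_def by blast
  with k show False
    by (simp add: complement_valuation_def)
qed

theorem theorem5p2:
  shows "\<exists>(M :: nat set) (v :: nat set \<Rightarrow> real).
    finite M \<and> valuation M v \<and>
    (\<exists>S g. S \<subseteq> M \<and> g \<in> M \<and> g \<notin> S \<and> v (insert g S) = v S) \<and>
    \<not> (\<exists>A. allocation {0, 1 :: nat} M A \<and> EFX {0, 1} (\<lambda>_. v) A \<and>
           pareto_optimal {0, 1} M (\<lambda>_. v) A)"
proof (rule exI[of _ "{0,1,2}"], rule exI[of _ complement_valuation], intro conjI)
  show "finite {0,1,2::nat}" by simp
  show "valuation {0,1,2} complement_valuation"
    by (rule valuation_complement_valuation)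
  show "\<exists>S g. S \<subseteq> {0,1,2::nat} \<and> g \<in> {0,1,2} \<and> g \<notin> S \<and>
      complement_valuation (insert g S) = complement_valuation S"
    by (rule exI[of _ "{}"], rule exI[of _ "0::nat"]) (simp add: complement_valuation_def)
  show "\<not> (\<exists>A. allocation {0,1::nat} {0,1,2} A \<and> EFX {0,1} (\<lambda>_. complement_valuation) A \<and>
           pareto_optimal {0,1} {0,1,2} (\<lambda>_. complement_valuation) A)"
    using pareto_optimal_complement_valuation_grand_bundle grand_bundle_not_EFX by metis
qed

end
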